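(* Let $I\subseteq\mathbb{R}$ be an interval, $f:I\to\mathbb{R}$ differentiable on the interior $I^\circ$, and $a,b\in I^\circ$ with $a<b$, $f'\in L[a,b]$. Let $g:[a,b]\to\mathbb{R}$ be continuous, $\alpha>0$, $q>1$ and $p=\frac{q}{q-1}$ (so $1/p+1/q=1$). If $|f'|^q$ is convex on $[a,b]$, then, with $m=\frac{a+b}{2}$, $$\left|f(m)\left[J^{\alpha}_{m-}g(a)+J^{\alpha}_{m+}g(b)\right]-\left[J^{\alpha}_{m-}(fg)(a)+J^{\alpha}_{m+}(fg)(b)\right]\right|$$ $$\le \frac{\|g\|_{[a,b],\infty}(b-a)^{\alpha+1}}{2^{\alpha+1+\frac2q}(\alpha p+1)^{1/p}\Gamma(\alpha+1)}\left[\big(3|f'(a)|^q+|f'(b)|^q\big)^{1/q}+\big(|f'(a)|^q+3|f'(b)|^q\big)^{1/q}\right].$$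
   Context: For $\alpha>0$ and an integrable function $h$, the Riemann–Liouville fractional integrals are $J^{\alpha}_{c+}h(x)=\frac{1}{\Gamma(\alpha)}\int_c^x (x-t)^{\alpha-1}h(t)\,dt$ for $x>c$, and $J^{\alpha}_{c-}h(x)=\frac{1}{\Gamma(\alpha)}\int_x^c (t-x)^{\alpha-1}h(t)\,dt$ for $x<c$, where $\Gamma$ is the Gamma function. Thus, with $m=\frac{a+b}{2}$, $J^{\alpha}_{m-}h(a)=\frac{1}{\Gamma(\alpha)}\int_a^{m}(t-a)^{\alpha-1}h(t)\,dt$ and $J^{\alpha}_{m+}h(b)=\frac{1}{\Gamma(\alpha)}\int_{m}^{b}(b-t)^{\alpha-1}h(t)\,dt$. Here $fg$ denotes the pointwise product. For a continuous $g$ and an interval $[c,d]$, $\|g\|_{[c,d],\infty}=\sup_{x\in[c,d]}|g(x)|$. *)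

theory Defs
  imports "HOL-Analysis.Analysis"
begin

text \<open>Left-sided RL fractional integral at x, lower terminal c:
  J^alpha_{c+} h (x) = 1/Gamma(alpha) * int_c^x (x-t)^(alpha-1) h(t) dt  (for x > c).\<close>
definition RL_left :: "real \<Rightarrow> real \<Rightarrow> (real \<Rightarrow> real) \<Rightarrow> real \<Rightarrow> real" where
  "RL_left \<alpha> c h x = integral {c..x} (\<lambda>t. (x - t) powr (\<alpha> - 1) * h t) / Gamma \<alpha>"

text \<open>Right-sided RL fractional integral at x, upper terminal c:
  J^alpha_{c-} h (x) = 1/Gamma(alpha) * int_x^c (t-x)^(alpha-1) h(t) dt  (for x < c).\<close>
definition RL_right :: "real \<Rightarrow> real \<Rightarrow> (real \<Rightarrow> real) \<Rightarrow> real \<Rightarrow> real" where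
  "RL_right \<alpha> c h x = integral {x..c} (\<lambda>t. (t - x) powr (\<alpha> - 1) * h t) / Gamma \<alpha>"

end

theory Submission
  imports Defs
begin

(* The midpoint defect  f(m) [J g] - [J (f g)]  is the sum of a left part on [a,m], with kernel
   (t-a)^(alpha-1), and a right part on [m,b], with kernel (b-t)^(alpha-1); the right part is the
   left part of the reflected functions t -> f(-t), g(-t).  For the left part, with
   G(s) = int_a^s (t-a)^(alpha-1) g(t) dt, integration by parts gives
       f(m) G(m) - int_a^m (t-a)^(alpha-1) f g  =  int_a^m G(s) f'(s) ds,
   and |G(s)| <= M (s-a)^alpha / alpha with M = sup |g|.  Convexity bounds |f'|^q by its chord,
   and Hoelder's inequality for (s-a)^alpha and the q-th root of the chord gives the constant. *)

text \<open>Hoelder's inequality for continuous nonnegative functions on a compact interval,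
  obtained by integrating Young's inequality after normalisation.\<close>

lemma holder_continuous_integral:
  fixes u w :: "real \<Rightarrow> real"
  assumes "a \<le> c" and cu: "continuous_on {a..c} u" and cw: "continuous_on {a..c} w"
    and u0: "\<And>s. s \<in> {a..c} \<Longrightarrow> u s \<ge> 0" and w0: "\<And>s. s \<in> {a..c} \<Longrightarrow> w s \<ge> 0"
    and p: "p > 1" and q: "q > 1" and pq: "1/p + 1/q = 1"
    and U: "((\<lambda>s. u s powr p) has_integral U) {a..c}" and W: "((\<lambda>s. w s powr q) has_integral W) {a..c}"
    and U0: "U > 0" and W0: "W > 0"
  shows "integral {a..c} (\<lambda>s. u s * w s) \<le> U powr (1/p) * W powr (1/q)"
proof -
  define X where "X = U powr (1/p)"
  define Y where "Y = W powr (1/q)"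
  have X0: "X > 0" and Y0: "Y > 0" using U0 W0 by (auto simp: X_def Y_def)
  have Xp: "X powr p = U" using U0 p by (simp add: X_def powr_powr)
  have Yq: "Y powr q = W" using W0 q by (simp add: Y_def powr_powr)
  have young: "u s * w s \<le> X * Y * (u s powr p / (p * U) + w s powr q / (q * W))"
    if s: "s \<in> {a..c}" for s
  proof -
    have "(u s / X) * (w s / Y) \<le> (u s / X) powr p / p + (w s / Y) powr q / q"
      by (rule Youngs_inequality) (use p q pq u0 w0 s X0 Y0 in auto)
    also have "\<dots> = u s powr p / (p * U) + w s powr q / (q * W)"
      using u0 w0 s X0 Y0 by (simp add: powr_divide Xp Yq mult.commute)
    finally show ?thesis using X0 Y0 by (simp add: field_simps)
  qed
  have "((\<lambda>s. u s * w s) has_integral integral {a..c} (\<lambda>s. u s * w s)) {a..c}"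
    by (intro integrable_integral integrable_continuous_interval continuous_on_mult cu cw)
  moreover have "((\<lambda>s. X * Y * (u s powr p / (p * U) + w s powr q / (q * W))) has_integral
      X * Y * (U / (p * U) + W / (q * W))) {a..c}"
    by (intro has_integral_mult_right has_integral_add has_integral_divide U W)
  ultimately have "integral {a..c} (\<lambda>s. u s * w s) \<le> X * Y * (U / (p * U) + W / (q * W))"
    by (rule has_integral_le) (use young in auto)
  also have "\<dots> = X * Y" using U0 W0 pq by simp
  finally show ?thesis by (simp add: X_def Y_def)
qed

lemma power_kernel_has_integral:
  fixes a s \<gamma> :: real
  assumes "\<gamma> > 0" and "a \<le> s"
  shows "((\<lambda>t. (t - a) powr (\<gamma> - 1)) has_integral (s - a) powr \<gamma> / \<gamma>) {a..s}"
proof -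
  have "((\<lambda>t. (t - a) powr (\<gamma> - 1)) has_integral ((s - a) powr \<gamma> / \<gamma> - (a - a) powr \<gamma> / \<gamma>)) {a..s}"
  proof (rule fundamental_theorem_of_calculus_interior[OF \<open>a \<le> s\<close>])
    show "continuous_on {a..s} (\<lambda>t. (t - a) powr \<gamma> / \<gamma>)"
      using \<open>\<gamma> > 0\<close> by (intro continuous_intros continuous_on_powr') auto
    fix x assume "x \<in> {a<..<s}"
    then have "((\<lambda>t. (t - a) powr \<gamma> / \<gamma>) has_real_derivative (\<gamma> * (x - a) powr (\<gamma> - 1) * 1 / \<gamma>)) (at x)"
      by (auto intro!: derivative_eq_intros)
    then show "((\<lambda>t. (t - a) powr \<gamma> / \<gamma>) has_vector_derivative (x - a) powr (\<gamma> - 1)) (at x)"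
      using \<open>\<gamma> > 0\<close> by (simp add: has_real_derivative_iff_has_vector_derivative)
  qed
  then show ?thesis by simp
qed

lemma power_kernel_times_absolutely_integrable:
  fixes g :: "real \<Rightarrow> real"
  assumes "\<alpha> > 0" and "a \<le> c" and g: "continuous_on {a..c} g"
  shows "(\<lambda>t. (t - a) powr (\<alpha> - 1) * g t) absolutely_integrable_on {a..c}"
proof -
  have "(\<lambda>t. (t - a) powr (\<alpha> - 1)) absolutely_integrable_on {a..c}"
    by (rule nonnegative_absolutely_integrable_1)
       (use power_kernel_has_integral[OF assms(1,2)] in \<open>auto simp: integrable_on_def\<close>)
  moreover have "g \<in> borel_measurable (lebesgue_on {a..c})"
    using g by (intro continuous_imp_measurable_on_sets_lebesgue) auto
  moreover have "bounded (g ` {a..c})"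
    using g by (intro compact_imp_bounded compact_continuous_image) auto
  ultimately have "(\<lambda>t. g t * (t - a) powr (\<alpha> - 1)) absolutely_integrable_on {a..c}"
    by (intro absolutely_integrable_bounded_measurable_product_real) auto
  then show ?thesis by (simp add: mult.commute)
qed

lemma power_kernel_primitive_bound:
  fixes g :: "real \<Rightarrow> real"
  assumes "\<alpha> > 0" and "a \<le> s"
    and int: "(\<lambda>t. (t - a) powr (\<alpha> - 1) * g t) integrable_on {a..s}"
    and gM: "\<And>t. t \<in> {a..s} \<Longrightarrow> \<bar>g t\<bar> \<le> M"
  shows "\<bar>integral {a..s} (\<lambda>t. (t - a) powr (\<alpha> - 1) * g t)\<bar> \<le> M / \<alpha> * (s - a) powr \<alpha>"
proof -
  have kint: "((\<lambda>t. M * (t - a) powr (\<alpha> - 1)) has_integral M * ((s - a) powr \<alpha> / \<alpha>)) {a..s}"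
    by (intro has_integral_mult_right power_kernel_has_integral assms)
  have "norm (integral {a..s} (\<lambda>t. (t - a) powr (\<alpha> - 1) * g t))
      \<le> integral {a..s} (\<lambda>t. M * (t - a) powr (\<alpha> - 1))"
  proof (rule integral_norm_bound_integral[OF int])
    show "(\<lambda>t. M * (t - a) powr (\<alpha> - 1)) integrable_on {a..s}"
      using kint by blast
    show "norm ((t - a) powr (\<alpha> - 1) * g t) \<le> M * (t - a) powr (\<alpha> - 1)" if "t \<in> {a..s}" for t
      using gM[OF that] by (simp add: abs_mult mult.commute mult_right_mono)
  qed
  also have "\<dots> = M / \<alpha> * (s - a) powr \<alpha>"
    using integral_unique[OF kint] by simp
  finally show ?thesis by simp
qed

lemma primitive_has_real_derivative:
  fixes K :: "real \<Rightarrow> real"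
  assumes Kint: "K integrable_on {a..c}" and Kc: "continuous_on {a<..<c} K" and s: "s \<in> {a<..<c}"
  shows "((\<lambda>x. integral {a..x} K) has_real_derivative K s) (at s)"
proof -
  have "isCont K s"
    using Kc s by (simp add: continuous_on_eq_continuous_at)
  then have "continuous (at s within {a..c} - {}) K"
    by (simp add: continuous_at_imp_continuous_at_within)
  from integral_has_vector_derivative_continuous_at[OF Kint _ _ this] s
  have "((\<lambda>x. integral {a..x} K) has_vector_derivative K s) (at s within {a..c})"
    by auto
  then show ?thesis
    using s by (simp add: at_within_Icc_at has_real_derivative_iff_has_vector_derivative)
qed

lemma has_integral_primitive_times_derivative:
  fixes K F F' :: "real \<Rightarrow> real"
  assumes "a \<le> c"
    and Kabs: "K absolutely_integrable_on {a..c}" and Kc: "continuous_on {a<..<c} K"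
    and F: "\<And>s. s \<in> {a..c} \<Longrightarrow> (F has_real_derivative F' s) (at s)"
    and F': "F' absolutely_integrable_on {a..c}"
  shows "((\<lambda>s. integral {a..s} K * F' s) has_integral
           F c * integral {a..c} K - integral {a..c} (\<lambda>t. K t * F t)) {a..c}"
proof -
  define G where "G = (\<lambda>s. integral {a..s} K)"
  have Kint: "K integrable_on {a..c}"
    using Kabs by (rule set_lebesgue_integral_eq_integral(1))
  have Gc: "continuous_on {a..c} G"
    unfolding G_def by (rule indefinite_integral_continuous_1[OF Kint])
  have Fc: "continuous_on {a..c} F"
    by (intro continuous_at_imp_continuous_on ballI DERIV_isCont[OF F])
  have Gd: "(G has_real_derivative K s) (at s)" if "s \<in> {a<..<c}" for s
    unfolding G_def using Kint Kc that by (rule primitive_has_real_derivative)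
  \<comment> \<open>the product \<open>G \<cdot> (F c - F)\<close> vanishes at both ends\<close>
  have "((\<lambda>s. K s * (F c - F s) - G s * F' s) has_integral
      G c * (F c - F c) - G a * (F c - F a)) {a..c}"
  proof (rule fundamental_theorem_of_calculus_interior[OF \<open>a \<le> c\<close>])
    show "continuous_on {a..c} (\<lambda>s. G s * (F c - F s))"
      using Gc Fc by (intro continuous_intros)
    fix x assume x: "x \<in> {a<..<c}"
    have "((\<lambda>s. G s * (F c - F s)) has_real_derivative K x * (F c - F x) + (0 - F' x) * G x) (at x)"
      using x by (intro DERIV_mult Gd DERIV_diff DERIV_const F) auto
    then show "((\<lambda>s. G s * (F c - F s)) has_vector_derivative K x * (F c - F x) - G x * F' x) (at x)"
      by (simp add: has_real_derivative_iff_has_vector_derivative mult.commute)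
  qed
  then have FTC: "((\<lambda>s. K s * (F c - F s) - G s * F' s) has_integral 0) {a..c}"
    by (simp add: G_def)
  have "(\<lambda>s. G s * F' s) absolutely_integrable_on {a..c}"
  proof (rule absolutely_integrable_bounded_measurable_product_real[OF _ _ _ F'])
    show "G \<in> borel_measurable (lebesgue_on {a..c})"
      using Gc by (intro continuous_imp_measurable_on_sets_lebesgue) auto
    show "bounded (G ` {a..c})"
      using Gc by (intro compact_imp_bounded compact_continuous_image) auto
  qed auto
  then have GF': "((\<lambda>s. G s * F' s) has_integral integral {a..c} (\<lambda>s. G s * F' s)) {a..c}"
    by (intro integrable_integral set_lebesgue_integral_eq_integral(1))
  have "((\<lambda>s. K s * (F c - F s)) has_integral integral {a..c} (\<lambda>s. G s * F' s)) {a..c}"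
    using has_integral_add[OF FTC GF'] by simp
  from has_integral_diff[OF has_integral_mult_right[OF integrable_integral[OF Kint], where c="F c"] this]
  have "((\<lambda>t. K t * F t) has_integral
      F c * integral {a..c} K - integral {a..c} (\<lambda>s. G s * F' s)) {a..c}"
    by (simp add: algebra_simps)
  then have "integral {a..c} (\<lambda>s. G s * F' s) = F c * integral {a..c} K - integral {a..c} (\<lambda>t. K t * F t)"
    by (simp add: integral_unique)
  then show ?thesis
    using GF' by (simp add: G_def)
qed

lemma chord_left_half_has_integral:
  fixes A B a h :: real
  assumes "h > 0"
  shows "((\<lambda>s. A + (B - A) * (s - a) / (2 * h)) has_integral h * (3 * A + B) / 4) {a..a+h}"
proof -
  define P where "P y = A * y + (B - A) * (y - a)^2 / (4 * h)" for y
  have "((\<lambda>s. A + (B - A) * (s - a) / (2 * h)) has_integral P (a + h) - P a) {a..a+h}"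
  proof (rule fundamental_theorem_of_calculus_interior)
    show "continuous_on {a..a+h} P"
      unfolding P_def using \<open>h > 0\<close> by (intro continuous_intros) auto
    fix x assume "x \<in> {a<..<a+h}"
    have "(P has_real_derivative A + (B - A) * (x - a) / (2 * h)) (at x)"
      unfolding P_def using \<open>h > 0\<close> by (auto intro!: derivative_eq_intros simp: field_simps)
    then show "(P has_vector_derivative A + (B - A) * (x - a) / (2 * h)) (at x)"
      by (simp add: has_real_derivative_iff_has_vector_derivative)
  qed (use \<open>h > 0\<close> in auto)
  moreover have "P (a + h) - P a = h * (3 * A + B) / 4"
    using \<open>h > 0\<close> by (simp add: P_def field_simps power2_eq_square)
  ultimately show ?thesis by simp
qed

lemma chord_nonneg:
  fixes A B a h s :: real
  assumes "h > 0" and "A \<ge> 0" and "B \<ge> 0" and "s \<in> {a..a + 2 * h}"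
  shows "A + (B - A) * (s - a) / (2 * h) \<ge> 0"
proof -
  define t where "t = (s - a) / (2 * h)"
  have "0 \<le> t" "t \<le> 1"
    using assms(1,4) by (auto simp: t_def field_simps)
  then have "(1 - t) * A + t * B \<ge> 0"
    using assms(2,3) by (intro add_nonneg_nonneg mult_nonneg_nonneg) auto
  moreover have "A + (B - A) * (s - a) / (2 * h) = (1 - t) * A + t * B"
    using assms(1) by (simp add: t_def field_simps)
  ultimately show ?thesis
    by simp
qed

text \<open>The Hoelder bound in closed form: the \<open>L\<^sup>p\<close> and \<open>L\<^sup>q\<close> integrals
  \<open>h powr (\<alpha> p + 1) / (\<alpha> p + 1)\<close> and \<open>h (3A + B) / 4\<close> combine into a multiple of
  \<open>h powr (\<alpha> + 1)\<close> because \<open>1/p + 1/q = 1\<close>.\<close>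

lemma holder_constant_closed_form:
  fixes A B h \<alpha> p q :: real
  assumes h: "h > 0" and "\<alpha> > 0" and q: "q > 1" and p: "p = q / (q - 1)"
    and "3 * A + B \<ge> 0"
  shows "(h powr (\<alpha> * p + 1) / (\<alpha> * p + 1)) powr (1/p) * (h * (3 * A + B) / 4) powr (1/q)
       = h powr (\<alpha> + 1) * (3 * A + B) powr (1/q) / (2 powr (2/q) * (\<alpha> * p + 1) powr (1/p))"
proof -
  have p1: "p > 1" and pq: "1/p + 1/q = 1"
    using q by (auto simp: p field_simps)
  have ap: "\<alpha> * p + 1 > 0"
    using \<open>\<alpha> > 0\<close> p1 by (simp add: add_pos_pos)
  have eU: "(h powr (\<alpha> * p + 1) / (\<alpha> * p + 1)) powr (1/p) = h powr (\<alpha> + 1/p) / (\<alpha> * p + 1) powr (1/p)"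
    using p1 h ap by (simp add: powr_divide powr_powr field_simps)
  have "(4::real) powr (1/q) = 2 powr (2/q)"
    using powr_powr[of 2 2 "1/q"] by simp
  then have eW: "(h * (3 * A + B) / 4) powr (1/q) = h powr (1/q) * (3 * A + B) powr (1/q) / 2 powr (2/q)"
    using h \<open>3 * A + B \<ge> 0\<close> by (simp add: powr_divide powr_mult)
  have eh: "h powr (\<alpha> + 1/p) * h powr (1/q) = h powr (\<alpha> + 1)"
    using pq by (simp add: powr_add[symmetric] add.assoc)
  show ?thesis
    unfolding eU eW eh[symmetric] by (simp add: field_simps)
qed

lemma holder_power_chord_bound:
  fixes A B a h \<alpha> p q :: real
  assumes h: "h > 0" and alpha: "\<alpha> > 0" and q: "q > 1" and p: "p = q / (q - 1)"
    and A0: "A \<ge> 0" and B0: "B \<ge> 0"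
  shows "integral {a..a+h} (\<lambda>s. (s - a) powr \<alpha> * (A + (B - A) * (s - a) / (2 * h)) powr (1/q))
         \<le> h powr (\<alpha> + 1) * (3 * A + B) powr (1/q) / (2 powr (2/q) * (\<alpha> * p + 1) powr (1/p))"
proof -
  define u where "u s = (s - a) powr \<alpha>" for s
  define chord where "chord s = A + (B - A) * (s - a) / (2 * h)" for s
  define w where "w s = chord s powr (1/q)" for s
  define U where "U = h powr (\<alpha> * p + 1) / (\<alpha> * p + 1)"
  define W where "W = h * (3 * A + B) / 4"
  have p1: "p > 1" and pq: "1/p + 1/q = 1"
    using q by (auto simp: p field_simps)
  have chord0: "chord s \<ge> 0" if "s \<in> {a..a+h}" for s
    unfolding chord_def using h A0 B0 that by (intro chord_nonneg) auto
  have uc: "continuous_on {a..a+h} u"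
    unfolding u_def using alpha by (intro continuous_intros continuous_on_powr') auto
  have wc: "continuous_on {a..a+h} w"
    unfolding w_def
  proof (intro continuous_on_powr' continuous_on_const ballI conjI impI)
    show "continuous_on {a..a+h} chord"
      unfolding chord_def using h by (intro continuous_intros) auto
  qed (use q chord0 in auto)
  have U: "((\<lambda>s. u s powr p) has_integral U) {a..a+h}"
    using power_kernel_has_integral[of "\<alpha> * p + 1" a "a + h"] alpha p1 h
    by (simp add: u_def powr_powr U_def add_pos_pos)
  have W: "((\<lambda>s. w s powr q) has_integral W) {a..a+h}"
    unfolding W_def
  proof (rule has_integral_eq[OF _ chord_left_half_has_integral[OF h]])
    show "A + (B - A) * (s - a) / (2 * h) = w s powr q" if "s \<in> {a..a+h}" for s
      using chord0[OF that] q by (simp add: w_def chord_def powr_powr)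
  qed
  have "integral {a..a+h} (\<lambda>s. u s * w s) \<le> U powr (1/p) * W powr (1/q)"
  proof (cases "W > 0")
    case True
    have "U > 0"
      using h alpha p1 by (simp add: U_def add_pos_pos)
    with True show ?thesis
      using holder_continuous_integral[OF _ uc wc _ _ p1 q pq U W] h chord0 by (auto simp: u_def w_def)
  next
    case False
    then have "A = 0" "B = 0"
      using h A0 B0 by (auto simp: W_def zero_less_mult_iff)
    then show ?thesis
      by (simp add: w_def chord_def W_def)
  qed
  also have "U powr (1/p) * W powr (1/q)
      = h powr (\<alpha> + 1) * (3 * A + B) powr (1/q) / (2 powr (2/q) * (\<alpha> * p + 1) powr (1/p))"
    unfolding U_def W_def using h alpha q p A0 B0 by (intro holder_constant_closed_form) auto
  finally show ?thesis
    by (simp add: u_def w_def chord_def)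
qed

text \<open>The one-sided weighted defect on \<open>[a, c]\<close>: by integration by parts it equals
  \<open>\<integral> G F'\<close>, so any continuous majorant \<open>w\<close> of \<open>|F'|\<close> bounds it through the growth of \<open>G\<close>.\<close>

lemma power_kernel_defect_bound:
  fixes F F' g w :: "real \<Rightarrow> real"
  assumes "a \<le> c" and alpha: "\<alpha> > 0"
    and g: "continuous_on {a..c} g" and gM: "\<And>t. t \<in> {a..c} \<Longrightarrow> \<bar>g t\<bar> \<le> M"
    and F: "\<And>s. s \<in> {a..c} \<Longrightarrow> (F has_real_derivative F' s) (at s)"
    and F': "F' absolutely_integrable_on {a..c}"
    and w: "continuous_on {a..c} w" and F'w: "\<And>s. s \<in> {a..c} \<Longrightarrow> \<bar>F' s\<bar> \<le> w s"
  shows "\<bar>F c * integral {a..c} (\<lambda>t. (t - a) powr (\<alpha> - 1) * g t)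
          - integral {a..c} (\<lambda>t. (t - a) powr (\<alpha> - 1) * (F t * g t))\<bar>
         \<le> M / \<alpha> * integral {a..c} (\<lambda>s. (s - a) powr \<alpha> * w s)"
proof -
  define K where "K = (\<lambda>t. (t - a) powr (\<alpha> - 1) * g t)"
  have M0: "M \<ge> 0"
    using gM[of a] \<open>a \<le> c\<close> by auto
  have Kabs: "K absolutely_integrable_on {a..c}"
    unfolding K_def using alpha \<open>a \<le> c\<close> g by (rule power_kernel_times_absolutely_integrable)
  have "continuous_on {a<..<c} K"
    unfolding K_def using continuous_on_subset[OF g]
    by (intro continuous_intros) (auto simp: greaterThanLessThan_subseteq_atLeastAtMost_iff)
  from has_integral_primitive_times_derivative[OF \<open>a \<le> c\<close> Kabs this F F']
  have parts: "((\<lambda>s. integral {a..s} K * F' s) has_integral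
      F c * integral {a..c} K - integral {a..c} (\<lambda>t. K t * F t)) {a..c}" .
  have pointwise: "norm (integral {a..s} K * F' s) \<le> M / \<alpha> * ((s - a) powr \<alpha> * w s)"
    if s: "s \<in> {a..c}" for s
  proof -
    have "K integrable_on {a..s}"
      using s by (intro set_lebesgue_integral_eq_integral(1) absolutely_integrable_on_subinterval[OF Kabs]) auto
    then have "\<bar>integral {a..s} K\<bar> \<le> M / \<alpha> * (s - a) powr \<alpha>"
      unfolding K_def using alpha s gM by (intro power_kernel_primitive_bound) auto
    then have "\<bar>integral {a..s} K\<bar> * \<bar>F' s\<bar> \<le> (M / \<alpha> * (s - a) powr \<alpha>) * w s"
      using F'w[OF s] M0 alpha by (intro mult_mono) auto
    then show ?thesis
      by (simp add: abs_mult)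
  qed
  have "(\<lambda>s. M / \<alpha> * ((s - a) powr \<alpha> * w s)) integrable_on {a..c}"
    using alpha by (intro integrable_continuous_interval continuous_intros continuous_on_powr' w) auto
  from integral_norm_bound_integral[OF has_integral_integrable[OF parts] this pointwise]
  have "\<bar>F c * integral {a..c} K - integral {a..c} (\<lambda>t. K t * F t)\<bar>
      \<le> M / \<alpha> * integral {a..c} (\<lambda>s. (s - a) powr \<alpha> * w s)"
    using integral_unique[OF parts] by simp
  moreover have "(\<lambda>t. K t * F t) = (\<lambda>t. (t - a) powr (\<alpha> - 1) * (F t * g t))"
    by (simp add: K_def fun_eq_iff)
  ultimately show ?thesis
    by (simp add: K_def)
qed

lemma left_half_estimate:
  fixes F F' g :: "real \<Rightarrow> real" and a h \<alpha> q p M A B :: real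
  assumes h: "h > 0" and alpha: "\<alpha> > 0" and q: "q > 1" and p: "p = q / (q - 1)"
    and g: "continuous_on {a..a+h} g" and gM: "\<And>t. t \<in> {a..a+h} \<Longrightarrow> \<bar>g t\<bar> \<le> M"
    and F: "\<And>s. s \<in> {a..a+h} \<Longrightarrow> (F has_real_derivative F' s) (at s)"
    and F': "F' absolutely_integrable_on {a..a+h}"
    and F'_chord: "\<And>s. s \<in> {a..a+h} \<Longrightarrow> \<bar>F' s\<bar> powr q \<le> A + (B - A) * (s - a) / (2 * h)"
    and A0: "A \<ge> 0" and B0: "B \<ge> 0"
  shows "\<bar>F (a+h) * integral {a..a+h} (\<lambda>t. (t - a) powr (\<alpha> - 1) * g t)
          - integral {a..a+h} (\<lambda>t. (t - a) powr (\<alpha> - 1) * (F t * g t))\<bar>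
         \<le> M * h powr (\<alpha> + 1) * (3 * A + B) powr (1/q) / (\<alpha> * 2 powr (2/q) * (\<alpha> * p + 1) powr (1/p))"
proof -
  define chord where "chord s = A + (B - A) * (s - a) / (2 * h)" for s
  have M0: "M \<ge> 0"
    using gM[of a] h by auto
  have "continuous_on {a..a+h} (\<lambda>s. chord s powr (1/q))"
  proof (intro continuous_on_powr' continuous_on_const ballI conjI impI)
    show "continuous_on {a..a+h} chord"
      unfolding chord_def using h by (intro continuous_intros) auto
    show "chord s \<ge> 0" if "s \<in> {a..a+h}" for s
      using order_trans[OF powr_ge_zero F'_chord[OF that]] by (simp add: chord_def)
  qed (use q in auto)
  moreover have "\<bar>F' s\<bar> \<le> chord s powr (1/q)" if s: "s \<in> {a..a+h}" for s
  proof -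
    have "\<bar>F' s\<bar> = (\<bar>F' s\<bar> powr q) powr (1/q)"
      using q by (simp add: powr_powr)
    also have "\<dots> \<le> chord s powr (1/q)"
      using F'_chord[OF s] q by (intro powr_mono2) (auto simp: chord_def)
    finally show ?thesis .
  qed
  ultimately have "\<bar>F (a+h) * integral {a..a+h} (\<lambda>t. (t - a) powr (\<alpha> - 1) * g t)
          - integral {a..a+h} (\<lambda>t. (t - a) powr (\<alpha> - 1) * (F t * g t))\<bar>
      \<le> M / \<alpha> * integral {a..a+h} (\<lambda>s. (s - a) powr \<alpha> * chord s powr (1/q))"
    using h alpha g gM F F' by (intro power_kernel_defect_bound) auto
  also have "\<dots> \<le> M / \<alpha> * (h powr (\<alpha> + 1) * (3 * A + B) powr (1/q) / (2 powr (2/q) * (\<alpha> * p + 1) powr (1/p)))"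
    unfolding chord_def using M0 alpha
    by (intro mult_left_mono holder_power_chord_bound h alpha q p A0 B0) auto
  finally show ?thesis
    by (simp add: mult.assoc)
qed

text \<open>The mirror image: the defect on \<open>[b-h, b]\<close> with kernel \<open>(b - t) powr (\<alpha> - 1)\<close>, obtained
  from the left-half estimate for the reflected functions \<open>t \<mapsto> F (-t)\<close>, \<open>t \<mapsto> g (-t)\<close>.\<close>

lemma right_half_estimate:
  fixes F F' g :: "real \<Rightarrow> real" and b h \<alpha> q p M A B :: real
  assumes h: "h > 0" and alpha: "\<alpha> > 0" and q: "q > 1" and p: "p = q / (q - 1)"
    and g: "continuous_on {b-h..b} g" and gM: "\<And>t. t \<in> {b-h..b} \<Longrightarrow> \<bar>g t\<bar> \<le> M"
    and F: "\<And>s. s \<in> {b-h..b} \<Longrightarrow> (F has_real_derivative F' s) (at s)"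
    and F': "F' absolutely_integrable_on {b-h..b}"
    and F'_chord: "\<And>s. s \<in> {b-h..b} \<Longrightarrow> \<bar>F' s\<bar> powr q \<le> B + (A - B) * (b - s) / (2 * h)"
    and A0: "A \<ge> 0" and B0: "B \<ge> 0"
  shows "\<bar>F (b-h) * integral {b-h..b} (\<lambda>t. (b - t) powr (\<alpha> - 1) * g t)
          - integral {b-h..b} (\<lambda>t. (b - t) powr (\<alpha> - 1) * (F t * g t))\<bar>
         \<le> M * h powr (\<alpha> + 1) * (A + 3 * B) powr (1/q) / (\<alpha> * 2 powr (2/q) * (\<alpha> * p + 1) powr (1/p))"
proof -
  have reflect: "x \<in> {-b..-b+h} \<longleftrightarrow> -x \<in> {b-h..b}" for x
    by auto
  have reflected: "\<bar>F (-(-b+h)) * integral {-b..-b+h} (\<lambda>t. (t - -b) powr (\<alpha> - 1) * g (-t))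
          - integral {-b..-b+h} (\<lambda>t. (t - -b) powr (\<alpha> - 1) * (F (-t) * g (-t)))\<bar>
         \<le> M * h powr (\<alpha> + 1) * (3 * B + A) powr (1/q) / (\<alpha> * 2 powr (2/q) * (\<alpha> * p + 1) powr (1/p))"
  proof (rule left_half_estimate[OF h alpha q p, where F'="\<lambda>x. - F' (-x)"])
    show "continuous_on {-b..-b+h} (\<lambda>t. g (-t))"
      by (rule continuous_on_compose2[OF g]) (auto intro!: continuous_intros)
    show "((\<lambda>t. F (-t)) has_real_derivative - F' (-s)) (at s)" if "s \<in> {-b..-b+h}" for s
      using DERIV_chain2[OF F DERIV_minus[OF DERIV_ident]] that unfolding reflect by simp
    have "(\<lambda>x. F' (-x)) absolutely_integrable_on {-b..-(b-h)}"
      using F' by (rule absolutely_integrable_reflect_real[THEN iffD2])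
    then have "(\<lambda>x. (-1) * F' (-x)) absolutely_integrable_on {-b..-b+h}"
      by (intro set_integrable_mult_right) simp
    then show "(\<lambda>x. - F' (-x)) absolutely_integrable_on {-b..-b+h}"
      by simp
    show "\<bar>- F' (-s)\<bar> powr q \<le> B + (A - B) * (s - -b) / (2 * h)" if "s \<in> {-b..-b+h}" for s
      using F'_chord[of "-s"] that unfolding reflect by (simp add: add.commute)
  qed (use gM A0 B0 in \<open>auto simp: reflect\<close>)
  have reflect_integral: "integral {-b..-b+h} (\<lambda>t. (t - -b) powr (\<alpha> - 1) * k (-t))
      = integral {b-h..b} (\<lambda>t. (b - t) powr (\<alpha> - 1) * k t)" for k :: "real \<Rightarrow> real"
    using Henstock_Kurzweil_Integration.integral_reflect_real[of b "b-h" "\<lambda>t. (b - t) powr (\<alpha> - 1) * k t"]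
    by (simp add: add.commute)
  show ?thesis
    using reflected reflect_integral[of g] reflect_integral[of "\<lambda>t. F t * g t"] by (simp add: add.commute)
qed

text \<open>Dividing by \<open>Gamma \<alpha>\<close> and taking \<open>h = (b - a)/2\<close> turns the half-interval constant into
  the constant of the theorem.\<close>

lemma half_interval_constant:
  fixes a b M C \<alpha> q p :: real
  assumes "\<alpha> > 0" and "a < b"
  shows "M * ((b - a) / 2) powr (\<alpha> + 1) * C / (\<alpha> * 2 powr (2/q) * (\<alpha> * p + 1) powr (1/p)) / Gamma \<alpha>
       = M * (b - a) powr (\<alpha> + 1) / (2 powr (\<alpha> + 1 + 2/q) * (\<alpha> * p + 1) powr (1/p) * Gamma (\<alpha> + 1)) * C"
proof -
  have "Gamma \<alpha> > 0"
    using assms(1) by simp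
  moreover have "Gamma (\<alpha> + 1) = \<alpha> * Gamma \<alpha>"
    by (rule Gamma_plus1) (use assms(1) in \<open>auto elim!: nonpos_Ints_cases\<close>)
  moreover have "((b - a) / 2) powr (\<alpha> + 1) = (b - a) powr (\<alpha> + 1) / 2 powr (\<alpha> + 1)"
    using assms(2) by (simp add: powr_divide)
  moreover have "(2::real) powr (\<alpha> + 1 + 2/q) = 2 powr (\<alpha> + 1) * 2 powr (2/q)"
    by (simp add: powr_add)
  ultimately show ?thesis
    by (simp add: mult.commute mult.left_commute)
qed

lemma RL_right_midpoint_estimate:
  fixes F F' g :: "real \<Rightarrow> real" and a b \<alpha> q p M :: real
  assumes ab: "a < b" and alpha: "\<alpha> > 0" and q: "q > 1" and p: "p = q / (q - 1)"
    and g: "continuous_on {a..b} g" and gM: "\<And>t. t \<in> {a..b} \<Longrightarrow> \<bar>g t\<bar> \<le> M"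
    and F: "\<And>s. s \<in> {a..b} \<Longrightarrow> (F has_real_derivative F' s) (at s)"
    and F': "F' absolutely_integrable_on {a..b}"
    and conv: "convex_on {a..b} (\<lambda>x. \<bar>F' x\<bar> powr q)"
  shows "\<bar>F ((a+b)/2) * RL_right \<alpha> ((a+b)/2) g a - RL_right \<alpha> ((a+b)/2) (\<lambda>t. F t * g t) a\<bar>
         \<le> M * (b - a) powr (\<alpha> + 1) / (2 powr (\<alpha> + 1 + 2/q) * (\<alpha> * p + 1) powr (1/p) * Gamma (\<alpha> + 1))
           * (3 * \<bar>F' a\<bar> powr q + \<bar>F' b\<bar> powr q) powr (1/q)"
proof -
  define h where "h = (b - a) / 2"
  have h: "h > 0" "a + h = (a+b)/2" "2 * h = b - a" and half: "{a..a+h} \<subseteq> {a..b}"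
    using ab by (auto simp: h_def field_simps)
  have "\<bar>F (a+h) * integral {a..a+h} (\<lambda>t. (t - a) powr (\<alpha> - 1) * g t)
          - integral {a..a+h} (\<lambda>t. (t - a) powr (\<alpha> - 1) * (F t * g t))\<bar>
        \<le> M * h powr (\<alpha> + 1) * (3 * \<bar>F' a\<bar> powr q + \<bar>F' b\<bar> powr q) powr (1/q)
          / (\<alpha> * 2 powr (2/q) * (\<alpha> * p + 1) powr (1/p))"
  proof (rule left_half_estimate[OF h(1) alpha q p])
    show "\<bar>F' s\<bar> powr q \<le> \<bar>F' a\<bar> powr q + (\<bar>F' b\<bar> powr q - \<bar>F' a\<bar> powr q) * (s - a) / (2 * h)"
      if "s \<in> {a..a+h}" for s
      using convex_onD_Icc'[OF conv, of s] that half unfolding h(3) by (auto simp: algebra_simps)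
  qed (use half in \<open>auto intro: gM F continuous_on_subset[OF g half]
         absolutely_integrable_on_subinterval[OF F' half]\<close>)
  then have "\<bar>(F (a+h) * integral {a..a+h} (\<lambda>t. (t - a) powr (\<alpha> - 1) * g t)
          - integral {a..a+h} (\<lambda>t. (t - a) powr (\<alpha> - 1) * (F t * g t))) / Gamma \<alpha>\<bar>
        \<le> M * h powr (\<alpha> + 1) * (3 * \<bar>F' a\<bar> powr q + \<bar>F' b\<bar> powr q) powr (1/q)
          / (\<alpha> * 2 powr (2/q) * (\<alpha> * p + 1) powr (1/p)) / Gamma \<alpha>"
    unfolding abs_divide abs_of_pos[OF Gamma_real_pos[OF alpha]] using alpha by (intro divide_right_mono) auto
  moreover have "F ((a+b)/2) * RL_right \<alpha> ((a+b)/2) g a - RL_right \<alpha> ((a+b)/2) (\<lambda>t. F t * g t) a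
      = (F (a+h) * integral {a..a+h} (\<lambda>t. (t - a) powr (\<alpha> - 1) * g t)
          - integral {a..a+h} (\<lambda>t. (t - a) powr (\<alpha> - 1) * (F t * g t))) / Gamma \<alpha>"
    unfolding RL_right_def h(2) by (simp add: diff_divide_distrib)
  ultimately show ?thesis
    unfolding half_interval_constant[OF alpha ab, symmetric] h_def by simp
qed

lemma RL_left_midpoint_estimate:
  fixes F F' g :: "real \<Rightarrow> real" and a b \<alpha> q p M :: real
  assumes ab: "a < b" and alpha: "\<alpha> > 0" and q: "q > 1" and p: "p = q / (q - 1)"
    and g: "continuous_on {a..b} g" and gM: "\<And>t. t \<in> {a..b} \<Longrightarrow> \<bar>g t\<bar> \<le> M"
    and F: "\<And>s. s \<in> {a..b} \<Longrightarrow> (F has_real_derivative F' s) (at s)"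
    and F': "F' absolutely_integrable_on {a..b}"
    and conv: "convex_on {a..b} (\<lambda>x. \<bar>F' x\<bar> powr q)"
  shows "\<bar>F ((a+b)/2) * RL_left \<alpha> ((a+b)/2) g b - RL_left \<alpha> ((a+b)/2) (\<lambda>t. F t * g t) b\<bar>
         \<le> M * (b - a) powr (\<alpha> + 1) / (2 powr (\<alpha> + 1 + 2/q) * (\<alpha> * p + 1) powr (1/p) * Gamma (\<alpha> + 1))
           * (\<bar>F' a\<bar> powr q + 3 * \<bar>F' b\<bar> powr q) powr (1/q)"
proof -
  define h where "h = (b - a) / 2"
  have h: "h > 0" "b - h = (a+b)/2" "2 * h = b - a" and half: "{b-h..b} \<subseteq> {a..b}"
    using ab by (auto simp: h_def field_simps)
  have "\<bar>F (b-h) * integral {b-h..b} (\<lambda>t. (b - t) powr (\<alpha> - 1) * g t)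
          - integral {b-h..b} (\<lambda>t. (b - t) powr (\<alpha> - 1) * (F t * g t))\<bar>
        \<le> M * h powr (\<alpha> + 1) * (\<bar>F' a\<bar> powr q + 3 * \<bar>F' b\<bar> powr q) powr (1/q)
          / (\<alpha> * 2 powr (2/q) * (\<alpha> * p + 1) powr (1/p))"
  proof (rule right_half_estimate[OF h(1) alpha q p])
    show "\<bar>F' s\<bar> powr q \<le> \<bar>F' b\<bar> powr q + (\<bar>F' a\<bar> powr q - \<bar>F' b\<bar> powr q) * (b - s) / (2 * h)"
      if "s \<in> {b-h..b}" for s
      using convex_onD_Icc''[OF conv, of s] that half unfolding h(3) by (auto simp: algebra_simps)
  qed (use half in \<open>auto intro: gM F continuous_on_subset[OF g half]
         absolutely_integrable_on_subinterval[OF F' half]\<close>)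
  then have "\<bar>(F (b-h) * integral {b-h..b} (\<lambda>t. (b - t) powr (\<alpha> - 1) * g t)
          - integral {b-h..b} (\<lambda>t. (b - t) powr (\<alpha> - 1) * (F t * g t))) / Gamma \<alpha>\<bar>
        \<le> M * h powr (\<alpha> + 1) * (\<bar>F' a\<bar> powr q + 3 * \<bar>F' b\<bar> powr q) powr (1/q)
          / (\<alpha> * 2 powr (2/q) * (\<alpha> * p + 1) powr (1/p)) / Gamma \<alpha>"
    unfolding abs_divide abs_of_pos[OF Gamma_real_pos[OF alpha]] using alpha by (intro divide_right_mono) auto
  moreover have "F ((a+b)/2) * RL_left \<alpha> ((a+b)/2) g b - RL_left \<alpha> ((a+b)/2) (\<lambda>t. F t * g t) b
      = (F (b-h) * integral {b-h..b} (\<lambda>t. (b - t) powr (\<alpha> - 1) * g t)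
          - integral {b-h..b} (\<lambda>t. (b - t) powr (\<alpha> - 1) * (F t * g t))) / Gamma \<alpha>"
    unfolding RL_left_def h(2) by (simp add: diff_divide_distrib)
  ultimately show ?thesis
    unfolding half_interval_constant[OF alpha ab, symmetric] h_def by simp
qed

lemma Icc_subset_interior_interval:
  fixes I :: "real set"
  assumes "is_interval I" and "a \<in> interior I" and "b \<in> interior I"
  shows "{a..b} \<subseteq> interior I"
proof -
  have "convex (interior I)"
    using assms(1) by (simp add: is_interval_convex_1 convex_interior)
  with assms(2,3) have "closed_segment a b \<subseteq> interior I"
    by (rule closed_segment_subset)
  then show ?thesis
    by (auto simp: closed_segment_eq_real_ivl split: if_splits)
qed

lemma abs_le_SUP_continuous:
  fixes g :: "real \<Rightarrow> real"
  assumes "continuous_on {a..b} g" and "t \<in> {a..b}"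
  shows "\<bar>g t\<bar> \<le> (SUP x\<in>{a..b}. \<bar>g x\<bar>)"
proof (rule cSUP_upper[OF assms(2)])
  have "bounded ((\<lambda>x. \<bar>g x\<bar>) ` {a..b})"
    using assms(1) by (intro compact_imp_bounded compact_continuous_image continuous_intros) auto
  then show "bdd_above ((\<lambda>x. \<bar>g x\<bar>) ` {a..b})"
    by (rule bounded_imp_bdd_above)
qed

theorem theorem2p6:
  fixes I :: "real set" and f g :: "real \<Rightarrow> real" and a b \<alpha> q p :: real
  assumes I: "is_interval I"
    and fdiff: "\<And>x. x \<in> interior I \<Longrightarrow> f differentiable (at x)"
    and ab: "a \<in> interior I" "b \<in> interior I" "a < b"
    and f'int: "(deriv f) absolutely_integrable_on {a..b}"
    and gcont: "continuous_on {a..b} g"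
    and alpha: "\<alpha> > 0"
    and q: "q > 1"
    and p: "p = q / (q - 1)"
    and conv: "convex_on {a..b} (\<lambda>x. \<bar>deriv f x\<bar> powr q)"
  shows "\<bar>f ((a+b)/2) * (RL_right \<alpha> ((a+b)/2) g a + RL_left \<alpha> ((a+b)/2) g b)
           - (RL_right \<alpha> ((a+b)/2) (\<lambda>t. f t * g t) a + RL_left \<alpha> ((a+b)/2) (\<lambda>t. f t * g t) b)\<bar>
         \<le> (SUP x\<in>{a..b}. \<bar>g x\<bar>) * (b - a) powr (\<alpha> + 1)
             / (2 powr (\<alpha> + 1 + 2 / q) * (\<alpha> * p + 1) powr (1 / p) * Gamma (\<alpha> + 1))
           * ((3 * \<bar>deriv f a\<bar> powr q + \<bar>deriv f b\<bar> powr q) powr (1 / q)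
              + (\<bar>deriv f a\<bar> powr q + 3 * \<bar>deriv f b\<bar> powr q) powr (1 / q))"
proof -
  have f': "(f has_real_derivative deriv f s) (at s)" if "s \<in> {a..b}" for s
    using fdiff Icc_subset_interior_interval[OF I ab(1,2)] that
    by (auto simp: DERIV_deriv_iff_real_differentiable)
  have gM: "\<bar>g t\<bar> \<le> (SUP x\<in>{a..b}. \<bar>g x\<bar>)" if "t \<in> {a..b}" for t
    using gcont that by (rule abs_le_SUP_continuous)
  note left = RL_right_midpoint_estimate[OF ab(3) alpha q p gcont gM f' f'int conv]
  note right = RL_left_midpoint_estimate[OF ab(3) alpha q p gcont gM f' f'int conv]
  have split: "f ((a+b)/2) * (RL_right \<alpha> ((a+b)/2) g a + RL_left \<alpha> ((a+b)/2) g b)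
           - (RL_right \<alpha> ((a+b)/2) (\<lambda>t. f t * g t) a + RL_left \<alpha> ((a+b)/2) (\<lambda>t. f t * g t) b)
      = (f ((a+b)/2) * RL_right \<alpha> ((a+b)/2) g a - RL_right \<alpha> ((a+b)/2) (\<lambda>t. f t * g t) a)
        + (f ((a+b)/2) * RL_left \<alpha> ((a+b)/2) g b - RL_left \<alpha> ((a+b)/2) (\<lambda>t. f t * g t) b)"
    by (simp add: algebra_simps)
  show ?thesis
    unfolding split using order_trans[OF abs_triangle_ineq add_mono[OF left right]]
    by (simp only: distrib_left)
qed

end
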